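(* Let $\Delta t>0$, $L>0$, $M\ge0$, $\alpha=\Delta t\big[1+\frac{L\Delta t}{2}+\frac{(L\Delta t)^2}{6}+\frac{(L\Delta t)^3}{24}\big]$, and let $\Phi:\mathbb{R}^n\to\mathbb{R}^n$ be the one-step Runge–Kutta state-transition map, assumed to satisfy $\|\Phi(x)-\Phi(y)\|\le(1+L\alpha)\|x-y\|+\alpha M$ for all $x,y$. Let $N$ be a positive integer, $T=N\Delta t$, $\phi_N$ the $N$-fold composition of $\Phi$, $a=(1+L\alpha)^N$ and $b=\sum_{r=0}^{N-1}(1+L\alpha)^r\alpha M$. Let $r_0>0$, $k\ge1$, $\lambda>0$, $\mathbb{D}_0=\{x:\|x\|\le r_0\}$, and assume $\|\phi_N(x_0)\|\le k\|x_0\|e^{-\lambda T}$ for all $x_0\in\mathbb{D}_0$. Then for all $x,y\in\mathbb{D}_0$, $$\|\phi_N(x)-\phi_N(y)\|\le\sqrt{2kr_0e^{-\lambda T}a\|x-y\|+2kr_0e^{-\lambda T}b}.$$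
   Context: $\Phi$ is the classical RK4 map $\Phi(x)=x+\frac{\Delta t}{6}(k_1+2k_2+2k_3+k_4)$, $k_1=f(x)$, $k_2=f(x+k_1\Delta t/2)$, $k_3=f(x+k_2\Delta t/2)$, $k_4=f(x+k_3\Delta t)$, for an autonomous system $\dot x=f(x)$ with equilibrium at the origin which is exponentially stable on $\mathbb{D}_0$ with constants $k,\lambda$; $\phi_N(x_0)$ is the simulated state after time $T$ starting at $x_0$. *)

theory Defs
  imports "HOL-Analysis.Analysis"
begin

definition rk4_step :: "(real^'n \<Rightarrow> real^'n) \<Rightarrow> real \<Rightarrow> real^'n \<Rightarrow> real^'n" where
  "rk4_step f dt x =
     (let k1 = f x;
          k2 = f (x + (dt / 2) *\<^sub>R k1);
          k3 = f (x + (dt / 2) *\<^sub>R k2);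
          k4 = f (x + dt *\<^sub>R k3)
      in x + (dt / 6) *\<^sub>R (k1 + 2 *\<^sub>R k2 + 2 *\<^sub>R k3 + k4))"

end

theory Submission
  imports Defs
begin

(* Iterating the affine Lipschitz bound of the one-step map N times bounds the
   distance of the two trajectories at time T by a |x - y| + b; exponential
   stability bounds it by 2 k r0 exp(-lam T), since both end points lie that close
   to the origin.  A quantity below two nonnegative bounds is below their
   geometric mean, which is the claim. *)

lemma funpow_dist_le:
  fixes g :: "'a::real_normed_vector \<Rightarrow> 'a" and c \<beta> :: real
  assumes c_nonneg: "c \<ge> 0"
    and g_dist: "\<And>x y. norm (g x - g y) \<le> c * norm (x - y) + \<beta>"
  shows "norm ((g ^^ n) x - (g ^^ n) y) \<le> c ^ n * norm (x - y) + (\<Sum>r<n. c ^ r * \<beta>)"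
proof (induction n)
  case 0
  then show ?case by simp
next
  case (Suc n)
  have "norm ((g ^^ Suc n) x - (g ^^ Suc n) y) \<le> c * norm ((g ^^ n) x - (g ^^ n) y) + \<beta>"
    using g_dist by simp
  also have "\<dots> \<le> c * (c ^ n * norm (x - y) + (\<Sum>r<n. c ^ r * \<beta>)) + \<beta>"
    using Suc c_nonneg by (simp add: mult_left_mono)
  also have "\<dots> = c ^ Suc n * norm (x - y) + (\<Sum>r<Suc n. c ^ r * \<beta>)"
    by (subst sum.lessThan_Suc_shift) (simp add: sum_distrib_left algebra_simps)
  finally show ?case .
qed

lemma norm_diff_le_of_linear_decay:
  fixes h :: "'a::real_normed_vector \<Rightarrow> 'b::real_normed_vector"
  assumes k_nonneg: "k \<ge> 0" and E_nonneg: "E \<ge> 0"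
    and decay: "\<And>x. norm x \<le> r \<Longrightarrow> norm (h x) \<le> k * norm x * E"
    and x: "norm x \<le> r" and y: "norm y \<le> r"
  shows "norm (h x - h y) \<le> 2 * k * r * E"
proof -
  have near_origin: "norm (h z) \<le> k * r * E" if z: "norm z \<le> r" for z
  proof -
    have "norm (h z) \<le> k * norm z * E" using decay[OF z] .
    also have "\<dots> \<le> k * r * E"
      using z k_nonneg E_nonneg by (simp add: mult_left_mono mult_right_mono)
    finally show ?thesis .
  qed
  show ?thesis
    using norm_triangle_ineq4[of "h x" "h y"] near_origin[OF x] near_origin[OF y] by linarith
qed

lemma le_sqrt_mult:
  fixes d P Q :: real
  assumes "0 \<le> d" "d \<le> P" "d \<le> Q"
  shows "d \<le> sqrt (P * Q)"
proof (rule real_le_rsqrt)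
  show "d\<^sup>2 \<le> P * Q"
    using assms by (simp add: power2_eq_square mult_mono)
qed

theorem theorem5:
  fixes f :: "real^'n \<Rightarrow> real^'n"
    and dt L M r0 k lam :: real and N :: nat
  assumes dt_pos: "dt > 0" and L_pos: "L > 0" and M_nonneg: "M \<ge> 0"
    and f_eq: "f 0 = 0"
    and Phi_bound: "\<And>x y. norm (rk4_step f dt x - rk4_step f dt y)
        \<le> (1 + L * (dt * (1 + L*dt/2 + (L*dt)^2/6 + (L*dt)^3/24))) * norm (x - y)
          + (dt * (1 + L*dt/2 + (L*dt)^2/6 + (L*dt)^3/24)) * M"
    and N_pos: "N > 0"
    and r0_pos: "r0 > 0" and k_ge: "k \<ge> 1" and lam_pos: "lam > 0"
    and stab: "\<And>x0. norm x0 \<le> r0 \<Longrightarrow>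
        norm ((rk4_step f dt ^^ N) x0) \<le> k * norm x0 * exp (- lam * (real N * dt))"
  shows "\<forall>x y. norm x \<le> r0 \<longrightarrow> norm y \<le> r0 \<longrightarrow>
    norm ((rk4_step f dt ^^ N) x - (rk4_step f dt ^^ N) y)
    \<le> sqrt (2 * k * r0 * exp (- lam * (real N * dt))
              * (1 + L * (dt * (1 + L*dt/2 + (L*dt)^2/6 + (L*dt)^3/24))) ^ N * norm (x - y)
            + 2 * k * r0 * exp (- lam * (real N * dt))
              * (\<Sum>r<N. (1 + L * (dt * (1 + L*dt/2 + (L*dt)^2/6 + (L*dt)^3/24))) ^ r
                    * (dt * (1 + L*dt/2 + (L*dt)^2/6 + (L*dt)^3/24)) * M))"
proof -
  define \<alpha> where "\<alpha> = dt * (1 + L*dt/2 + (L*dt)^2/6 + (L*dt)^3/24)"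
  define E where "E = exp (- lam * (real N * dt))"
  define \<phi> where "\<phi> = rk4_step f dt ^^ N"
  have "1 + L * \<alpha> \<ge> 0"
    unfolding \<alpha>_def using dt_pos L_pos by simp
  then have affine: "norm (\<phi> x - \<phi> y)
      \<le> (1 + L * \<alpha>) ^ N * norm (x - y) + (\<Sum>r<N. (1 + L * \<alpha>) ^ r * (\<alpha> * M))" for x y
    unfolding \<phi>_def by (rule funpow_dist_le) (use Phi_bound in \<open>simp add: \<alpha>_def\<close>)
  have decay: "norm (\<phi> x - \<phi> y) \<le> 2 * k * r0 * E" if "norm x \<le> r0" "norm y \<le> r0" for x y
    using norm_diff_le_of_linear_decay[of k E r0 \<phi>] k_ge stab that
    unfolding \<phi>_def E_def by simp
  have "norm (\<phi> x - \<phi> y)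
      \<le> sqrt (2 * k * r0 * E * ((1 + L * \<alpha>) ^ N * norm (x - y) + (\<Sum>r<N. (1 + L * \<alpha>) ^ r * (\<alpha> * M))))"
    if "norm x \<le> r0" "norm y \<le> r0" for x y
    using le_sqrt_mult[OF norm_ge_zero decay[OF that] affine] .
  then show ?thesis
    unfolding \<phi>_def E_def \<alpha>_def by (simp add: algebra_simps)
qed

end
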